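(* Let $f$ be a strategy-proof SCF and $G$ a gradual mechanism implementing $f$. If $G$ is indifference reaction-proof, then $G$ is incentive compatible.
   Context: Setting. $N$ finite set of agents, $X$ finite set of outcomes, finite type spaces $\Theta_i$, each type $\theta_i$ inducing a complete transitive preference $R(\theta_i)$ on $X$; $\Theta=\prod_i\Theta_i$. An SCF $f:\Theta\to X$ is strategy-proof if $f(\theta_i,\theta_{-i})\,R(\theta_i)\,f(\theta_i',\theta_{-i})$ for all $i,\theta_i,\theta_i',\theta_{-i}$. Dynamic game forms. A dynamic game form with perfect recall consists of a finite tree $\bar H$ of histories (finite sequences of action profiles) containing the empty initial history $\varnothing$, closed under prefixes ($\preceq$ prefix order, $\prec$ strict); terminal histories $Z$, non-terminal $H$; at each $h\in H$ a nonempty set $\mathbb P(h)$ of agents move simultaneously with available actions $A_i(h)$, all action profiles leading to successors; $\mathbb P(\varnothing)=N$; each agent's decision nodes $H_i$ are partitioned into information sets $\boldsymbol H_i$, with available actions constant on information sets and perfect recall; $\mathcal X:Z\to X$. For information sets of $i$, $\boldsymbol h_i\prec\bar{\boldsymbol h}_i$ if $h\prec\bar h$ for some $h\in\boldsymbol h_i,\bar h\in\bar{\boldsymbol h}_i$; $\bar{\boldsymbol h}_i$ is an immediate successor of $\boldsymbol h_i$ if $\boldsymbol h_i\prec\bar{\boldsymbol h}_i$ and no information set of $i$ lies strictly between them. Strategies choose an available action at each information set; $s_M$ denotes a profile for agents in $M$ ($s_{-i}$, $s_{-i,j}$ for agents other than $i$, other than $i,j$); a complete profile $s$ determines $z(s)$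 and $\mathcal X(s)=\mathcal X(z(s))$. Gradual mechanisms. A GM implementing $f$ is such a game form in which (1) actions of $i$ are nonempty subsets of $\Theta_i$; (2) at every $h\in H_i$ the available actions of $i$ are pairwise disjoint with union $\Theta_i(h)$, where for any history $h$, $\Theta_i(h)$ is the last action of $i$ in $h$ ($\Theta_i$ if $i$ has not acted); (3) $\mathcal X(z)=f(\theta)$ for all $z\in Z$, $\theta\in\Theta(z)=\prod_i\Theta_i(z)$. For a history $h$, $\Theta(h)=\prod_i\Theta_i(h)$; for an information set, $\Theta_i(\boldsymbol h_i)=\Theta_i(h)$ for $h\in\boldsymbol h_i$. Consistency. A history $h$ is consistent with $s_M$ ($M\subsetneq N$) if $h\preceq z(s_M,s_{N\setminus M})$ for some $s_{N\setminus M}$. Incentive compatibility. $s_i$ is unconditional for $\theta_i$ if $\theta_i\in s_i(h)$ for every $h\in H_i$ with $\theta_i\in\Theta_i(h)$ (denoted $s_{\theta_i}$). The GM is incentive compatible if $\mathcal X(s_{\theta_i},s_{-i})\,R(\theta_i)\,\mathcal X(s_i,s_{-i})$ for all $i,\theta_i$, unconditional $s_{\theta_i}$, $s_i$, $s_{-i}$. Indifference reaction-proofness. A GM $G$ implementing $f$ is indifference reaction-proof if for any two distinct agents $i,j\in N$, any pair of distinct information sets $\boldsymbol h_i^1,\boldsymbol h_i^2$ of $i$ that are immediate successors of a common information set $\boldsymbol h_i$ of $i$ with $\Theta_i(\boldsymbol h_i^1)=\Theta_i(\boldsymbol h_i^2)$, and any histories $h^1\in\boldsymbol h_i^1$, $h^2\in\boldsymbol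 h_i^2$ that are both consistent with a common strategy profile $s_{-i,j}$, there exists $h^k\in\{h^1,h^2\}$ such that $f(\theta)\,R(\theta_j^* )\,f(\theta')$ for all $\theta,\theta'\in\Theta(h^k)$ and all $\theta_j^*\in\Theta_j$. *)

theory Defs
  imports Main "HOL-Library.Sublist" "HOL-Library.FuncSet"
begin

text \<open>A history is a finite list of action profiles; an action profile is a partial
map from agents to actions whose domain is the set of agents moving at that history.\<close>

type_synonym ('i, 'a) hist = "('i \<Rightarrow> 'a option) list"

record ('i, 'a, 'x) game =
  hist :: "('i, 'a) hist set"
  mov  :: "('i, 'a) hist \<Rightarrow> 'i set"
  act  :: "'i \<Rightarrow> ('i, 'a) hist \<Rightarrow> 'a set"
  info :: "'i \<Rightarrow> ('i, 'a) hist set set"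
  outc :: "('i, 'a) hist \<Rightarrow> 'x"

definition nonterm :: "('i, 'a, 'x) game \<Rightarrow> ('i, 'a) hist set" where
  "nonterm G = {h \<in> hist G. \<exists>a. h @ [a] \<in> hist G}"

definition terminal :: "('i, 'a, 'x) game \<Rightarrow> ('i, 'a) hist set" where
  "terminal G = hist G - nonterm G"

definition dec_nodes :: "('i, 'a, 'x) game \<Rightarrow> 'i \<Rightarrow> ('i, 'a) hist set" where
  "dec_nodes G i = {h \<in> nonterm G. i \<in> mov G h}"

definition infoset_of :: "('i, 'a, 'x) game \<Rightarrow> 'i \<Rightarrow> ('i, 'a) hist \<Rightarrow> ('i, 'a) hist set" where
  "infoset_of G i h = (THE I. I \<in> info G i \<and> h \<in> I)"

definition experience :: "('i, 'a, 'x) game \<Rightarrow> 'i \<Rightarrow> ('i, 'a) hist \<Rightarrow> (('i, 'a) hist set \<times> 'a) list" where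
  "experience G i h =
     map (\<lambda>k. (infoset_of G i (take k h), the ((h ! k) i)))
         (filter (\<lambda>k. i \<in> mov G (take k h)) [0..<length h])"

definition game_form :: "'i set \<Rightarrow> ('i, 'a, 'x) game \<Rightarrow> bool" where
  "game_form N G \<longleftrightarrow>
     finite (hist G) \<and> [] \<in> hist G \<and>
     (\<forall>h \<in> hist G. \<forall>g. prefix g h \<longrightarrow> g \<in> hist G) \<and>
     [] \<in> nonterm G \<and> mov G [] = N \<and>
     (\<forall>h \<in> nonterm G. mov G h \<noteq> {} \<and> mov G h \<subseteq> N \<and>
        (\<forall>i \<in> mov G h. act G i h \<noteq> {}) \<and>
        (\<forall>a. h @ [a] \<in> hist G \<longleftrightarrow>
               (dom a = mov G h \<and> (\<forall>i \<in> mov G h. the (a i) \<in> act G i h)))) \<and>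
     (\<forall>i \<in> N.
        {} \<notin> info G i \<and> \<Union> (info G i) = dec_nodes G i \<and>
        (\<forall>I \<in> info G i. \<forall>J \<in> info G i. I \<noteq> J \<longrightarrow> I \<inter> J = {}) \<and>
        (\<forall>I \<in> info G i. \<forall>h \<in> I. \<forall>h' \<in> I. act G i h = act G i h') \<and>
        (\<forall>I \<in> info G i. \<forall>h \<in> I. \<forall>h' \<in> I. experience G i h = experience G i h'))"

definition strategy :: "('i, 'a, 'x) game \<Rightarrow> 'i \<Rightarrow> (('i, 'a) hist \<Rightarrow> 'a) \<Rightarrow> bool" where
  "strategy G i \<sigma> \<longleftrightarrow>
     (\<forall>h \<in> dec_nodes G i. \<sigma> h \<in> act G i h) \<and>
     (\<forall>I \<in> info G i. \<forall>h \<in> I. \<forall>h' \<in> I. \<sigma> h = \<sigma> h')"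

definition step :: "('i, 'a, 'x) game \<Rightarrow> ('i \<Rightarrow> ('i, 'a) hist \<Rightarrow> 'a) \<Rightarrow> ('i, 'a) hist \<Rightarrow> ('i, 'a) hist" where
  "step G s h = (if h \<in> nonterm G
                 then h @ [\<lambda>i. if i \<in> mov G h then Some (s i h) else None] else h)"

definition play :: "('i, 'a, 'x) game \<Rightarrow> ('i \<Rightarrow> ('i, 'a) hist \<Rightarrow> 'a) \<Rightarrow> ('i, 'a) hist" where
  "play G s = (step G s ^^ card (hist G)) []"

definition outcome :: "('i, 'a, 'x) game \<Rightarrow> ('i \<Rightarrow> ('i, 'a) hist \<Rightarrow> 'a) \<Rightarrow> 'x" where
  "outcome G s = outc G (play G s)"

definition consistent :: "'i set \<Rightarrow> ('i, 'a, 'x) game \<Rightarrow> 'i set \<Rightarrow> ('i \<Rightarrow> ('i, 'a) hist \<Rightarrow> 'a)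
                          \<Rightarrow> ('i, 'a) hist \<Rightarrow> bool" where
  "consistent N G M s h \<longleftrightarrow>
     (\<exists>t. (\<forall>i \<in> N. strategy G i (t i)) \<and> (\<forall>i \<in> M. t i = s i) \<and> prefix h (play G t))"

definition info_prec :: "('i, 'a) hist set \<Rightarrow> ('i, 'a) hist set \<Rightarrow> bool" where
  "info_prec I J \<longleftrightarrow> (\<exists>h \<in> I. \<exists>h' \<in> J. strict_prefix h h')"

definition immediate_succ :: "('i, 'a, 'x) game \<Rightarrow> 'i \<Rightarrow> ('i, 'a) hist set \<Rightarrow> ('i, 'a) hist set \<Rightarrow> bool" where
  "immediate_succ G i I J \<longleftrightarrow>
     info_prec I J \<and> \<not> (\<exists>K \<in> info G i. info_prec I K \<and> info_prec K J)"

definition typeset_at :: "('i \<Rightarrow> 'th set) \<Rightarrow> 'i \<Rightarrow> ('i, 'th set) hist \<Rightarrow> 'th set" where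
  "typeset_at Th i h = (case filter (\<lambda>a. a i \<noteq> None) h of
                          [] \<Rightarrow> Th i
                        | xs \<Rightarrow> the (last xs i))"

definition typeprofs_at :: "'i set \<Rightarrow> ('i \<Rightarrow> 'th set) \<Rightarrow> ('i, 'th set) hist \<Rightarrow> ('i \<Rightarrow> 'th) set" where
  "typeprofs_at N Th h = PiE N (\<lambda>i. typeset_at Th i h)"

definition typeset_info :: "('i \<Rightarrow> 'th set) \<Rightarrow> 'i \<Rightarrow> ('i, 'th set) hist set \<Rightarrow> 'th set" where
  "typeset_info Th i I = typeset_at Th i (SOME h. h \<in> I)"

definition gradual_mech ::
  "'i set \<Rightarrow> ('i \<Rightarrow> 'th set) \<Rightarrow> (('i \<Rightarrow> 'th) \<Rightarrow> 'x) \<Rightarrow> ('i, 'th set, 'x) game \<Rightarrow> bool" where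
  "gradual_mech N Th f G \<longleftrightarrow>
     game_form N G \<and>
     (\<forall>h \<in> nonterm G. \<forall>i \<in> mov G h. \<forall>a \<in> act G i h. a \<noteq> {} \<and> a \<subseteq> Th i) \<and>
     (\<forall>i \<in> N. \<forall>h \<in> dec_nodes G i.
        (\<forall>a \<in> act G i h. \<forall>b \<in> act G i h. a \<noteq> b \<longrightarrow> a \<inter> b = {}) \<and>
        \<Union> (act G i h) = typeset_at Th i h) \<and>
     (\<forall>z \<in> terminal G. \<forall>\<theta> \<in> typeprofs_at N Th z. outc G z = f \<theta>)"

definition strategy_proof ::
  "'i set \<Rightarrow> ('i \<Rightarrow> 'th set) \<Rightarrow> ('i \<Rightarrow> 'th \<Rightarrow> 'x \<Rightarrow> 'x \<Rightarrow> bool) \<Rightarrow> (('i \<Rightarrow> 'th) \<Rightarrow> 'x) \<Rightarrow> bool" where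
  "strategy_proof N Th R f \<longleftrightarrow>
     (\<forall>i \<in> N. \<forall>\<theta> \<in> PiE N Th. \<forall>\<theta>i' \<in> Th i. R i (\<theta> i) (f \<theta>) (f (\<theta>(i := \<theta>i'))))"

definition unconditional ::
  "('i \<Rightarrow> 'th set) \<Rightarrow> ('i, 'th set, 'x) game \<Rightarrow> 'i \<Rightarrow> 'th \<Rightarrow> (('i, 'th set) hist \<Rightarrow> 'th set) \<Rightarrow> bool" where
  "unconditional Th G i \<theta>i \<sigma> \<longleftrightarrow>
     (\<forall>h \<in> dec_nodes G i. \<theta>i \<in> typeset_at Th i h \<longrightarrow> \<theta>i \<in> \<sigma> h)"

definition incentive_compatible ::
  "'i set \<Rightarrow> ('i \<Rightarrow> 'th set) \<Rightarrow> ('i \<Rightarrow> 'th \<Rightarrow> 'x \<Rightarrow> 'x \<Rightarrow> bool) \<Rightarrow> ('i, 'th set, 'x) game \<Rightarrow> bool" where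
  "incentive_compatible N Th R G \<longleftrightarrow>
     (\<forall>i \<in> N. \<forall>\<theta>i \<in> Th i. \<forall>\<sigma>u \<sigma> s.
        strategy G i \<sigma>u \<and> unconditional Th G i \<theta>i \<sigma>u \<and> strategy G i \<sigma> \<and>
        (\<forall>k \<in> N - {i}. strategy G k (s k)) \<longrightarrow>
        R i \<theta>i (outcome G (s(i := \<sigma>u))) (outcome G (s(i := \<sigma>))))"

definition indiff_reaction_proof ::
  "'i set \<Rightarrow> ('i \<Rightarrow> 'th set) \<Rightarrow> ('i \<Rightarrow> 'th \<Rightarrow> 'x \<Rightarrow> 'x \<Rightarrow> bool) \<Rightarrow> (('i \<Rightarrow> 'th) \<Rightarrow> 'x)
     \<Rightarrow> ('i, 'th set, 'x) game \<Rightarrow> bool" where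
  "indiff_reaction_proof N Th R f G \<longleftrightarrow>
     (\<forall>i \<in> N. \<forall>j \<in> N. i \<noteq> j \<longrightarrow>
       (\<forall>I \<in> info G i. \<forall>I1 \<in> info G i. \<forall>I2 \<in> info G i.
          I1 \<noteq> I2 \<and> immediate_succ G i I I1 \<and> immediate_succ G i I I2 \<and>
          typeset_info Th i I1 = typeset_info Th i I2 \<longrightarrow>
          (\<forall>h1 \<in> I1. \<forall>h2 \<in> I2.
             (\<exists>s. (\<forall>k \<in> N - {i, j}. strategy G k (s k)) \<and>
                  consistent N G (N - {i, j}) s h1 \<and> consistent N G (N - {i, j}) s h2) \<longrightarrow>
             (\<exists>hk \<in> {h1, h2}. \<forall>\<theta> \<in> typeprofs_at N Th hk. \<forall>\<theta>' \<in> typeprofs_at N Th hk.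
                 \<forall>\<theta>j \<in> Th j. R j \<theta>j (f \<theta>) (f \<theta>')))))"

definition complete_transitive_on :: "'x set \<Rightarrow> ('x \<Rightarrow> 'x \<Rightarrow> bool) \<Rightarrow> bool" where
  "complete_transitive_on X r \<longleftrightarrow>
     (\<forall>x \<in> X. \<forall>y \<in> X. r x y \<or> r y x) \<and>
     (\<forall>x \<in> X. \<forall>y \<in> X. \<forall>z \<in> X. r x y \<longrightarrow> r y z \<longrightarrow> r x z)"

end

theory Submission
  imports Defs
begin

text \<open>Let agent \<open>d\<close> of true type \<open>\<theta>\<close> play an unconditional strategy or deviate, against
  fixed strategies of the others. If the two plays differ, stop each at the first history after
  their divergence at which \<open>d\<close> is indifferent among all outcomes still possible, or at its end.
  For every other agent \<open>p\<close>, the type sets of \<open>p\<close> at the two stopping points still intersect: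
  otherwise the experiences of \<open>p\<close> split before, at two sibling information sets with the same
  type set, and indifference reaction-proofness would have stopped one of the plays there.
  Choosing the types of the others in these intersections gives two type profiles differing only
  in \<open>d\<close>'s type, with \<open>\<theta>\<close> on the unconditional side; strategy-proofness compares them, and
  indifference at the stopping points transfers the comparison to the realised outcomes.\<close>

lemma strict_prefix_take: "k < length xs \<Longrightarrow> strict_prefix (take k xs) xs"
  unfolding strict_prefix_def using take_is_prefix[of k xs] by (auto dest: arg_cong[where f = length])

lemma prefix_nth: "prefix xs ys \<Longrightarrow> n < length xs \<Longrightarrow> ys ! n = xs ! n"
  by (auto elim!: prefixE simp: nth_append)

lemma take_prefix_mono: "a \<le> b \<Longrightarrow> prefix (take a xs) (take b xs)"
  by (metis min.absorb1 take_is_prefix take_take)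

lemma first_prefix_satisfying:
  assumes "prefix u z"
  obtains x where "prefix u x" "prefix x z" "x = z \<or> P x"
    "\<forall>k. length u \<le> k \<longrightarrow> k < length x \<longrightarrow> \<not> P (take k x)"
proof -
  define Q where "Q = (\<lambda>m. length u \<le> m \<and> m \<le> length z \<and> (m = length z \<or> P (take m z)))"
  define m where "m = (LEAST m. Q m)"
  have "Q (length z)"
    using prefix_length_le[OF assms] by (simp add: Q_def)
  then have Qm: "Q m" and least: "\<And>k. k < m \<Longrightarrow> \<not> Q k"
    unfolding m_def by (auto intro: LeastI dest: not_less_Least)
  have "u = take (length u) z"
    using assms by (auto elim!: prefixE)
  then have "prefix u (take m z)"
    using Qm take_prefix_mono[of "length u" m z] by (simp add: Q_def)
  moreover have "take m z = z \<or> P (take m z)"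
    using Qm by (auto simp: Q_def)
  moreover have "\<forall>k. length u \<le> k \<longrightarrow> k < length (take m z) \<longrightarrow> \<not> P (take k (take m z))"
    using least Qm by (auto simp: Q_def)
  ultimately show thesis
    using that take_is_prefix by blast
qed

lemma game_form_prefix_closed:
  assumes "game_form N G" "h \<in> hist G" "prefix g h"
  shows "g \<in> hist G"
proof -
  have "\<forall>h \<in> hist G. \<forall>g. prefix g h \<longrightarrow> g \<in> hist G"
    using assms(1) unfolding game_form_def by (elim conjE) assumption
  then show ?thesis
    using assms(2,3) by blast
qed

lemma game_form_root:
  assumes "game_form N G"
  shows "[] \<in> nonterm G" "mov G [] = N" "finite (hist G)"
proof -
  have "[] \<in> nonterm G \<and> mov G [] = N \<and> finite (hist G)"
    using assms unfolding game_form_def by (elim conjE) (intro conjI; assumption)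
  then show "[] \<in> nonterm G" "mov G [] = N" "finite (hist G)"
    by blast+
qed

lemma game_form_nonterm:
  assumes "game_form N G" "h \<in> nonterm G"
  shows "mov G h \<subseteq> N"
    and "h @ [a] \<in> hist G \<longleftrightarrow> dom a = mov G h \<and> (\<forall>i \<in> mov G h. the (a i) \<in> act G i h)"
    and "i \<in> mov G h \<Longrightarrow> act G i h \<noteq> {}"
proof -
  have "mov G h \<noteq> {} \<and> mov G h \<subseteq> N \<and> (\<forall>i \<in> mov G h. act G i h \<noteq> {}) \<and>
        (\<forall>a. h @ [a] \<in> hist G \<longleftrightarrow>
               (dom a = mov G h \<and> (\<forall>i \<in> mov G h. the (a i) \<in> act G i h)))"
    using assms unfolding game_form_def by (elim conjE) (drule bspec, assumption, assumption)
  then show "mov G h \<subseteq> N"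
    and "h @ [a] \<in> hist G \<longleftrightarrow> dom a = mov G h \<and> (\<forall>i \<in> mov G h. the (a i) \<in> act G i h)"
    and "i \<in> mov G h \<Longrightarrow> act G i h \<noteq> {}"
    by simp_all
qed

lemma game_form_info:
  assumes "game_form N G" "i \<in> N"
  shows "{} \<notin> info G i \<and> \<Union> (info G i) = dec_nodes G i \<and>
        (\<forall>I \<in> info G i. \<forall>J \<in> info G i. I \<noteq> J \<longrightarrow> I \<inter> J = {}) \<and>
        (\<forall>I \<in> info G i. \<forall>h \<in> I. \<forall>h' \<in> I. act G i h = act G i h') \<and>
        (\<forall>I \<in> info G i. \<forall>h \<in> I. \<forall>h' \<in> I. experience G i h = experience G i h')"
  using assms unfolding game_form_def by (elim conjE) (drule bspec, assumption, assumption)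

lemma info_covers_dec_nodes:
  assumes "game_form N G" "i \<in> N"
  shows "\<Union> (info G i) = dec_nodes G i"
  using game_form_info[OF assms] by (elim conjE) assumption

lemma info_disjoint:
  assumes "game_form N G" "i \<in> N" "I \<in> info G i" "J \<in> info G i" "I \<noteq> J"
  shows "I \<inter> J = {}"
proof -
  have "\<forall>I \<in> info G i. \<forall>J \<in> info G i. I \<noteq> J \<longrightarrow> I \<inter> J = {}"
    using game_form_info[OF assms(1,2)] by (elim conjE) assumption
  then show ?thesis
    using assms(3-5) by blast
qed

lemma perfect_recall:
  assumes "game_form N G" "i \<in> N" "I \<in> info G i" "h \<in> I" "h' \<in> I"
  shows "experience G i h = experience G i h'"
proof -
  have "\<forall>I \<in> info G i. \<forall>h \<in> I. \<forall>h' \<in> I. experience G i h = experience G i h'"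
    using game_form_info[OF assms(1,2)] by (elim conjE) assumption
  then show ?thesis
    using assms(3-5) by blast
qed

lemma hist_snocD:
  assumes "game_form N G" "h @ [a] \<in> hist G"
  shows "h \<in> nonterm G" "dom a = mov G h" "\<forall>i \<in> mov G h. the (a i) \<in> act G i h"
proof -
  have "h \<in> hist G"
    using game_form_prefix_closed[OF assms(1,2)] by (simp add: prefixI)
  then show nt: "h \<in> nonterm G"
    using assms(2) unfolding nonterm_def by blast
  show "dom a = mov G h" "\<forall>i \<in> mov G h. the (a i) \<in> act G i h"
    using game_form_nonterm(2)[OF assms(1) nt] assms(2) by simp_all
qed

lemma hist_take_nth:
  assumes "game_form N G" "h \<in> hist G" "k < length h"
  shows "take k h \<in> nonterm G" "dom (h ! k) = mov G (take k h)"
proof -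
  have "take k h @ [h ! k] \<in> hist G"
    using game_form_prefix_closed[OF assms(1,2) take_is_prefix, of "Suc k"] assms(3)
    by (simp add: take_Suc_conv_app_nth)
  then show "take k h \<in> nonterm G" "dom (h ! k) = mov G (take k h)"
    using hist_snocD[OF assms(1)] by blast+
qed

lemma terminal_prefix_eq:
  assumes "game_form N G" "z \<in> terminal G" "h \<in> hist G" "prefix z h"
  shows "h = z"
proof (rule ccontr)
  assume "h \<noteq> z"
  then obtain a as where "h = z @ a # as"
    using assms(4) by (metis prefixE append_Nil2 neq_Nil_conv)
  then have "z @ [a] \<in> hist G"
    using game_form_prefix_closed[OF assms(1,3)] by (simp add: prefixI)
  then show False
    using hist_snocD(1)[OF assms(1)] assms(2) by (simp add: terminal_def)
qed

subsection \<open>Information sets and experience\<close>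

lemma infoset_of_eq:
  assumes "game_form N G" "i \<in> N" "I \<in> info G i" "h \<in> I"
  shows "infoset_of G i h = I"
  unfolding infoset_of_def
  by (rule the_equality) (use assms info_disjoint[OF assms(1,2)] in blast)+

lemma infoset_of_dec_node:
  assumes "game_form N G" "i \<in> N" "h \<in> dec_nodes G i"
  shows "infoset_of G i h \<in> info G i" "h \<in> infoset_of G i h"
proof -
  obtain I where "I \<in> info G i" "h \<in> I"
    using info_covers_dec_nodes[OF assms(1,2)] assms(3) by blast
  then show "infoset_of G i h \<in> info G i" "h \<in> infoset_of G i h"
    using infoset_of_eq[OF assms(1,2)] by simp_all
qed

lemma experience_Nil [simp]: "experience G i [] = []"
  by (simp add: experience_def)

lemma experience_snoc:
  "experience G i (h @ [a]) = experience G i h @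
     (if i \<in> mov G h then [(infoset_of G i h, the (a i))] else [])"
proof -
  have "filter (\<lambda>k. i \<in> mov G (take k (h @ [a]))) [0..<length h]
      = filter (\<lambda>k. i \<in> mov G (take k h)) [0..<length h]"
    by (rule filter_cong) auto
  moreover have "map (\<lambda>k. (infoset_of G i (take k (h @ [a])), the (((h @ [a]) ! k) i)))
        (filter (\<lambda>k. i \<in> mov G (take k h)) [0..<length h])
      = map (\<lambda>k. (infoset_of G i (take k h), the ((h ! k) i)))
        (filter (\<lambda>k. i \<in> mov G (take k h)) [0..<length h])"
    by (rule map_cong) (auto simp: nth_append)
  ultimately show ?thesis
    by (simp add: experience_def)
qed

lemma experience_mono:
  assumes "prefix g h"
  shows "prefix (experience G i g) (experience G i h)"
  using assms
proof (induction h rule: rev_induct)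
  case (snoc a h)
  then show ?case
    by (cases "g = h @ [a]") (auto simp: experience_snoc intro: prefix_order.trans)
qed simp

lemma experience_length_less:
  assumes "strict_prefix g h" "i \<in> mov G g"
  shows "length (experience G i g) < length (experience G i h)"
proof -
  obtain a as where "h = g @ a # as"
    using assms(1) by (rule strict_prefixE')
  then have "prefix (experience G i (g @ [a])) (experience G i h)"
    by (intro experience_mono) (simp add: prefixI)
  then show ?thesis
    using prefix_length_le assms(2) by (fastforce simp: experience_snoc)
qed

lemma length_le_if_experience_length_le:
  assumes "prefix u x" "i \<in> mov G (take k x)"
    and "length (experience G i u) \<le> length (experience G i (take k x))"
  shows "length u \<le> k"
proof (rule ccontr)
  assume "\<not> length u \<le> k"
  then have "take k x = take k u" "k < length u"
    using assms(1) by (auto elim!: prefixE)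
  then have "length (experience G i (take k x)) < length (experience G i u)"
    using experience_length_less[OF strict_prefix_take] assms(2) by metis
  then show False
    using assms(3) by simp
qed

lemma experience_ne_Nil:
  assumes "game_form N G" "i \<in> N" "h \<noteq> []"
  shows "experience G i h \<noteq> []"
proof -
  have "length (experience G i []) < length (experience G i h)"
    by (rule experience_length_less)
      (use assms game_form_root(2)[OF assms(1)] in \<open>auto simp: strict_prefix_def\<close>)
  then show ?thesis
    by auto
qed

lemma experience_nth:
  assumes "n < length (experience G i h)"
  obtains k where "k < length h" "i \<in> mov G (take k h)"
    "experience G i (take k h) = take n (experience G i h)"
    "experience G i h ! n = (infoset_of G i (take k h), the ((h ! k) i))"
  using assms
proof (induction h arbitrary: thesis rule: rev_induct)
  case (snoc a h)
  show ?case
  proof (cases "n < length (experience G i h)")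
    case True
    show ?thesis
    proof (rule snoc.IH)
      fix k
      assume "k < length h" "i \<in> mov G (take k h)"
        "experience G i (take k h) = take n (experience G i h)"
        "experience G i h ! n = (infoset_of G i (take k h), the ((h ! k) i))"
      then show thesis
        using True by (intro snoc.prems(1)[of k]) (auto simp: experience_snoc nth_append)
    qed (fact True)
  next
    case False
    then have "i \<in> mov G h" "n = length (experience G i h)"
      using snoc.prems(2) by (auto simp: experience_snoc split: if_splits)
    then show ?thesis
      by (intro snoc.prems(1)[of "length h"]) (simp_all add: experience_snoc nth_append)
  qed
qed simp

lemma experience_last_decision:
  assumes "game_form N G" "i \<in> N" "h \<in> hist G" "experience G i h \<noteq> []"
  obtains k where "k < length h" "take k h \<in> dec_nodes G i"
    "experience G i (take k h) = butlast (experience G i h)"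
    "last (experience G i h) = (infoset_of G i (take k h), the ((h ! k) i))"
proof -
  let ?e = "experience G i h"
  obtain k where k: "k < length h" "i \<in> mov G (take k h)"
    "experience G i (take k h) = take (length ?e - 1) ?e"
    "?e ! (length ?e - 1) = (infoset_of G i (take k h), the ((h ! k) i))"
    using experience_nth[of "length ?e - 1" G i h] assms(4) by auto
  have "take k h \<in> dec_nodes G i"
    using hist_take_nth(1)[OF assms(1,3) k(1)] k(2) by (simp add: dec_nodes_def)
  then show thesis
    using that k assms(4) by (simp add: butlast_conv_take last_conv_nth)
qed

lemma experience_length_less_info:
  assumes "game_form N G" "i \<in> N" "I \<in> info G i" "h \<in> I" "strict_prefix h h'"
  shows "length (experience G i h) < length (experience G i h')"
proof (rule experience_length_less[OF assms(5)])
  have "h \<in> dec_nodes G i"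
    using info_covers_dec_nodes[OF assms(1,2)] assms(3,4) by blast
  then show "i \<in> mov G h"
    by (simp add: dec_nodes_def)
qed

text \<open>By perfect recall the length of the experience is constant on each information set, and it
  grows strictly along histories, so no information set fits strictly in between.\<close>

lemma immediate_succ_last_experience:
  assumes gf: "game_form N G" and "i \<in> N" "I \<in> info G i" "h \<in> I" "experience G i h \<noteq> []"
  shows "fst (last (experience G i h)) \<in> info G i"
    and "immediate_succ G i (fst (last (experience G i h))) I"
proof -
  have "h \<in> dec_nodes G i"
    using info_covers_dec_nodes[OF gf assms(2)] assms(3,4) by blast
  then have "h \<in> hist G"
    by (simp add: dec_nodes_def nonterm_def)
  then obtain k where k: "k < length h" "take k h \<in> dec_nodes G i"
      "experience G i (take k h) = butlast (experience G i h)"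
      "last (experience G i h) = (infoset_of G i (take k h), the ((h ! k) i))"
    by (rule experience_last_decision[OF gf assms(2) _ assms(5)])
  define K where "K = fst (last (experience G i h))"
  have K: "K \<in> info G i" "take k h \<in> K"
    using infoset_of_dec_node[OF gf assms(2) k(2)] k(4) by (simp_all add: K_def)
  then show "fst (last (experience G i h)) \<in> info G i"
    by (simp add: K_def)
  have len_K: "length (experience G i h') = length (experience G i h) - 1" if "h' \<in> K" for h'
    using perfect_recall[OF gf assms(2) K(1) that K(2)] k(3) by simp
  have len_I: "length (experience G i h') = length (experience G i h)" if "h' \<in> I" for h'
    using perfect_recall[OF gf assms(2) assms(3) that assms(4)] by simp
  have "info_prec K I"
    unfolding info_prec_def using K(2) assms(4) strict_prefix_take[OF k(1)] by blast
  moreover have "\<not> (info_prec K K' \<and> info_prec K' I)" if "K' \<in> info G i" for K'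
  proof
    assume "info_prec K K' \<and> info_prec K' I"
    then obtain h1 h1' h2' h2 where h: "h1 \<in> K" "h1' \<in> K'" "strict_prefix h1 h1'"
        "h2' \<in> K'" "h2 \<in> I" "strict_prefix h2' h2"
      unfolding info_prec_def by blast
    have "length (experience G i h1) < length (experience G i h2')"
      using experience_length_less_info[OF gf assms(2) K(1) h(1,3)] perfect_recall[OF gf assms(2) that h(2,4)] by simp
    moreover have "length (experience G i h2') < length (experience G i h2)"
      using experience_length_less_info[OF gf assms(2) that h(4,6)] .
    ultimately show False
      using len_K[OF h(1)] len_I[OF h(5)] by linarith
  qed
  ultimately show "immediate_succ G i (fst (last (experience G i h))) I"
    unfolding K_def[symmetric] immediate_succ_def by blast
qed

subsection \<open>Type sets\<close>

lemma typeset_at_Nil [simp]: "typeset_at Th i [] = Th i"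
  by (simp add: typeset_at_def)

lemma typeset_at_snoc:
  "typeset_at Th i (h @ [a]) = (if a i \<noteq> None then the (a i) else typeset_at Th i h)"
  unfolding typeset_at_def by (simp add: list.case_eq_if)

lemma typeset_at_experience:
  assumes "game_form N G" "h \<in> hist G"
  shows "typeset_at Th i h =
    (if experience G i h = [] then Th i else snd (last (experience G i h)))"
  using assms(2)
proof (induction h rule: rev_induct)
  case (snoc a h)
  have "h \<in> hist G"
    using game_form_prefix_closed[OF assms(1) snoc.prems] by (simp add: prefixI)
  moreover have "a i \<noteq> None \<longleftrightarrow> i \<in> mov G h"
    using hist_snocD(2)[OF assms(1) snoc.prems] by auto
  ultimately show ?case
    using snoc.IH by (simp add: typeset_at_snoc experience_snoc)
qed simp

lemma typeset_info_last_experience: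
  assumes gf: "game_form N G" and "i \<in> N" "I \<in> info G i" "h \<in> I" "experience G i h \<noteq> []"
  shows "typeset_info Th i I = snd (last (experience G i h))"
proof -
  define h0 where "h0 = (SOME h. h \<in> I)"
  have "h0 \<in> I"
    unfolding h0_def using assms(4) by (rule someI)
  moreover from this have "h0 \<in> hist G"
    using info_covers_dec_nodes[OF gf assms(2)] assms(3) by (auto simp: dec_nodes_def nonterm_def)
  ultimately show ?thesis
    using typeset_at_experience[OF gf, of h0 Th i] perfect_recall[OF gf assms(2,3) assms(4)] assms(5)
    by (simp add: typeset_info_def h0_def[symmetric])
qed

lemma gradual_mech_game_form: "gradual_mech N Th f G \<Longrightarrow> game_form N G"
  unfolding gradual_mech_def by (elim conjE)

lemma gradual_mech_action:
  assumes "gradual_mech N Th f G" "h \<in> nonterm G" "i \<in> mov G h" "a \<in> act G i h"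
  shows "a \<noteq> {}" "a \<subseteq> Th i"
proof -
  have "\<forall>h \<in> nonterm G. \<forall>i \<in> mov G h. \<forall>a \<in> act G i h. a \<noteq> {} \<and> a \<subseteq> Th i"
    using assms(1) unfolding gradual_mech_def by (elim conjE) assumption
  then show "a \<noteq> {}" "a \<subseteq> Th i"
    using assms(2-4) by blast+
qed

lemma gradual_mech_actions_cover:
  assumes "gradual_mech N Th f G" "i \<in> N" "h \<in> dec_nodes G i"
  shows "\<Union> (act G i h) = typeset_at Th i h"
proof -
  have "\<forall>i \<in> N. \<forall>h \<in> dec_nodes G i.
        (\<forall>a \<in> act G i h. \<forall>b \<in> act G i h. a \<noteq> b \<longrightarrow> a \<inter> b = {}) \<and>
        \<Union> (act G i h) = typeset_at Th i h"
    using assms(1) unfolding gradual_mech_def by (elim conjE) assumption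
  then show ?thesis
    using assms(2,3) by blast
qed

lemma gradual_mech_outc:
  assumes "gradual_mech N Th f G" "z \<in> terminal G" "\<theta> \<in> typeprofs_at N Th z"
  shows "outc G z = f \<theta>"
proof -
  have "\<forall>z \<in> terminal G. \<forall>\<theta> \<in> typeprofs_at N Th z. outc G z = f \<theta>"
    using assms(1) unfolding gradual_mech_def by (elim conjE) assumption
  then show ?thesis
    using assms(2,3) by blast
qed

lemma typeset_at_nonempty_subset:
  assumes gm: "gradual_mech N Th f G" and "h \<in> hist G" "i \<in> N"
  shows "typeset_at Th i h \<noteq> {}" "typeset_at Th i h \<subseteq> Th i"
proof -
  note gf = gradual_mech_game_form[OF gm]
  have "typeset_at Th i h \<noteq> {} \<and> typeset_at Th i h \<subseteq> Th i"
    using assms(2)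
  proof (induction h rule: rev_induct)
    case Nil
    have root: "[] \<in> nonterm G" "i \<in> mov G []"
      using game_form_root[OF gf] assms(3) by simp_all
    then obtain a where "a \<in> act G i []"
      using game_form_nonterm(3)[OF gf] by blast
    then show ?case
      using gradual_mech_action[OF gm root] by auto
  next
    case (snoc a h)
    have "h \<in> hist G"
      using game_form_prefix_closed[OF gf snoc.prems] by (simp add: prefixI)
    show ?case
    proof (cases "a i = None")
      case False
      then have "i \<in> mov G h"
        using hist_snocD(2)[OF gf snoc.prems] by auto
      then show ?thesis
        using False hist_snocD[OF gf snoc.prems] gradual_mech_action[OF gm]
        by (simp add: typeset_at_snoc)
    qed (use snoc.IH \<open>h \<in> hist G\<close> in \<open>simp add: typeset_at_snoc\<close>)
  qed
  then show "typeset_at Th i h \<noteq> {}" "typeset_at Th i h \<subseteq> Th i"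
    by blast+
qed

lemma typeset_at_antimono:
  assumes gm: "gradual_mech N Th f G" and "h \<in> hist G" "i \<in> N" "prefix g h"
  shows "typeset_at Th i h \<subseteq> typeset_at Th i g"
  using assms(2,4)
proof (induction h rule: rev_induct)
  case (snoc a h)
  note gf = gradual_mech_game_form[OF gm]
  have h: "h \<in> hist G"
    using game_form_prefix_closed[OF gf snoc.prems(1)] by (simp add: prefixI)
  have last_step: "typeset_at Th i (h @ [a]) \<subseteq> typeset_at Th i h"
  proof (cases "a i = None")
    case False
    then have "i \<in> mov G h" "the (a i) \<in> act G i h" "h \<in> dec_nodes G i"
      using hist_snocD[OF gf snoc.prems(1)] by (auto simp: dec_nodes_def)
    then show ?thesis
      using False gradual_mech_actions_cover[OF gm assms(3)] by (auto simp: typeset_at_snoc)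
  qed (simp add: typeset_at_snoc)
  show ?case
  proof (cases "g = h @ [a]")
    case False
    then have "prefix g h"
      using snoc.prems(2) by simp
    then show ?thesis
      using snoc.IH[OF h] last_step by blast
  qed simp
qed simp

text \<open>If the experience at \<open>x\<close> is continued by that at \<open>y\<close>, the last action recorded at
  \<open>x\<close> was also taken on the way to \<open>y\<close>, so the type set can only have shrunk since.\<close>

lemma typeset_at_experience_prefix:
  assumes gm: "gradual_mech N Th f G" and "i \<in> N" "x \<in> hist G" "y \<in> hist G"
    and "prefix (experience G i x) (experience G i y)" "experience G i x \<noteq> []"
  shows "typeset_at Th i y \<subseteq> typeset_at Th i x"
proof -
  note gf = gradual_mech_game_form[OF gm]
  define n where "n = length (experience G i x) - 1"
  have n: "n < length (experience G i x)"
    using assms(6) by (simp add: n_def)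
  then have "n < length (experience G i y)"
    using prefix_length_le[OF assms(5)] by simp
  then obtain k where k: "k < length y" "i \<in> mov G (take k y)"
      "experience G i y ! n = (infoset_of G i (take k y), the ((y ! k) i))"
    by (rule experience_nth)
  have "last (experience G i x) = experience G i y ! n"
    using prefix_nth[OF assms(5) n] assms(6) by (simp add: n_def last_conv_nth)
  then have "typeset_at Th i x = the ((y ! k) i)"
    using typeset_at_experience[OF gf assms(3), of Th i] assms(6) k(3) by simp
  moreover have "(y ! k) i \<noteq> None"
    using hist_take_nth(2)[OF gf assms(4) k(1)] k(2) by auto
  then have "typeset_at Th i (take (Suc k) y) = the ((y ! k) i)"
    using k(1) by (simp add: take_Suc_conv_app_nth typeset_at_snoc)
  ultimately show ?thesis
    using typeset_at_antimono[OF gm assms(4,2) take_is_prefix] by metis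
qed

lemma typeprofs_at_antimono:
  assumes "gradual_mech N Th f G" "h \<in> hist G" "prefix g h"
  shows "typeprofs_at N Th h \<subseteq> typeprofs_at N Th g"
  unfolding typeprofs_at_def
  by (rule PiE_mono) (use typeset_at_antimono[OF assms(1,2) _ assms(3)] in blast)

lemma typeprofs_at_nonempty:
  assumes "gradual_mech N Th f G" "h \<in> hist G"
  shows "typeprofs_at N Th h \<noteq> {}"
  unfolding typeprofs_at_def PiE_eq_empty_iff
  using typeset_at_nonempty_subset(1)[OF assms] by blast

lemma typeprofs_at_subset:
  assumes "gradual_mech N Th f G" "h \<in> hist G"
  shows "typeprofs_at N Th h \<subseteq> PiE N Th"
  unfolding typeprofs_at_def
  by (rule PiE_mono) (use typeset_at_nonempty_subset(2)[OF assms] in blast)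

subsection \<open>Plays\<close>

definition move_profile ::
  "('i, 'a, 'x) game \<Rightarrow> ('i \<Rightarrow> ('i, 'a) hist \<Rightarrow> 'a) \<Rightarrow> ('i, 'a) hist \<Rightarrow> 'i \<Rightarrow> 'a option" where
  "move_profile G t h = (\<lambda>i. if i \<in> mov G h then Some (t i h) else None)"

lemma step_iterate:
  assumes gf: "game_form N G" and strat: "\<forall>j \<in> N. strategy G j (t j)"
  shows "(step G t ^^ n) [] \<in> hist G \<and>
    (\<forall>k < length ((step G t ^^ n) []).
       (step G t ^^ n) [] ! k = move_profile G t (take k ((step G t ^^ n) []))) \<and>
    ((step G t ^^ n) [] \<in> nonterm G \<longrightarrow> length ((step G t ^^ n) []) = n)"
proof (induction n)
  case 0
  then show ?case
    using game_form_root(1)[OF gf] by (simp add: nonterm_def)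
next
  case (Suc n)
  define h where "h = (step G t ^^ n) []"
  have IH: "h \<in> hist G" "\<forall>k < length h. h ! k = move_profile G t (take k h)"
    "h \<in> nonterm G \<longrightarrow> length h = n"
    using Suc.IH unfolding h_def by auto
  show ?case
  proof (cases "h \<in> nonterm G")
    case True
    have "\<forall>i \<in> mov G h. the (move_profile G t h i) \<in> act G i h"
    proof
      fix i
      assume i: "i \<in> mov G h"
      then have "strategy G i (t i)"
        using strat game_form_nonterm(1)[OF gf True] by blast
      then show "the (move_profile G t h i) \<in> act G i h"
        using i True by (simp add: strategy_def move_profile_def dec_nodes_def)
    qed
    moreover have "dom (move_profile G t h) = mov G h"
      by (auto simp: move_profile_def split: if_splits)
    ultimately have "h @ [move_profile G t h] \<in> hist G"
      using game_form_nonterm(2)[OF gf True] by blast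
    moreover have "step G t h = h @ [move_profile G t h]"
      using True by (simp add: step_def move_profile_def)
    ultimately show ?thesis
      using IH True by (auto simp: h_def[symmetric] nth_append less_Suc_eq)
  next
    case False
    then have "step G t h = h"
      by (simp add: step_def)
    then show ?thesis
      using IH False by (simp add: h_def[symmetric])
  qed
qed

text \<open>A nonterminal history reached after \<open>n\<close> steps has length \<open>n\<close>, and its \<open>n + 1\<close>
  prefixes are distinct histories; so \<open>card (hist G)\<close> steps reach a terminal history.\<close>

lemma play_terminal:
  assumes gf: "game_form N G" and strat: "\<forall>j \<in> N. strategy G j (t j)"
  shows "play G t \<in> terminal G"
proof -
  define p where "p = play G t"
  have p: "p \<in> hist G" "p \<in> nonterm G \<longrightarrow> length p = card (hist G)"
    using step_iterate[OF gf strat, of "card (hist G)"] unfolding p_def play_def by auto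
  have "p \<notin> nonterm G"
  proof
    assume nt: "p \<in> nonterm G"
    have "inj_on (\<lambda>k. take k p) {0..length p}"
    proof (rule inj_onI)
      fix a b
      assume ab: "a \<in> {0..length p}" "b \<in> {0..length p}" and eq: "take a p = take b p"
      from ab have "length (take a p) = a" "length (take b p) = b"
        by simp_all
      then show "a = b"
        using eq by metis
    qed
    moreover have "(\<lambda>k. take k p) ` {0..length p} \<subseteq> hist G"
      by (rule image_subsetI) (rule game_form_prefix_closed[OF gf p(1) take_is_prefix])
    then have "card ((\<lambda>k. take k p) ` {0..length p}) \<le> card (hist G)"
      by (rule card_mono[OF game_form_root(3)[OF gf]])
    ultimately have "Suc (length p) \<le> card (hist G)"
      using card_image by fastforce
    then show False
      using p(2) nt by simp
  qed
  then show ?thesis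
    using p(1) unfolding p_def terminal_def by blast
qed

lemma prefix_play_nth:
  assumes gf: "game_form N G" and strat: "\<forall>j \<in> N. strategy G j (t j)"
    and "prefix x (play G t)" "k < length x"
  shows "x ! k = move_profile G t (take k x)"
proof -
  have "k < length (play G t)" "take k (play G t) = take k x"
    using assms(3,4) prefix_length_le[OF assms(3)] by (auto elim!: prefixE)
  then show ?thesis
    using step_iterate[OF gf strat, of "card (hist G)"] prefix_nth[OF assms(3,4)]
    by (simp add: play_def)
qed

lemma prefix_play_hist:
  assumes "game_form N G" "\<forall>j \<in> N. strategy G j (t j)" "prefix x (play G t)"
  shows "x \<in> hist G"
  using play_terminal[OF assms(1,2)] game_form_prefix_closed[OF assms(1) _ assms(3)]
  by (simp add: terminal_def)

lemma typeset_at_play_unconditional: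
  assumes gm: "gradual_mech N Th f G" and strat: "\<forall>j \<in> N. strategy G j (t j)"
    and "d \<in> N" "\<theta> \<in> Th d" "unconditional Th G d \<theta> (t d)" "prefix x (play G t)"
  shows "\<theta> \<in> typeset_at Th d x"
proof -
  note gf = gradual_mech_game_form[OF gm]
  have "\<theta> \<in> typeset_at Th d (take k x)" if "k \<le> length x" for k
    using that
  proof (induction k)
    case (Suc k)
    then have k: "k < length x"
      by simp
    have x: "x \<in> hist G"
      by (rule prefix_play_hist[OF gf strat assms(6)])
    have "take k x \<in> nonterm G"
      by (rule hist_take_nth(1)[OF gf x k])
    then have "d \<in> mov G (take k x) \<Longrightarrow> \<theta> \<in> t d (take k x)"
      using assms(5) Suc.IH k by (simp add: unconditional_def dec_nodes_def)
    then show ?case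
      using Suc.IH k prefix_play_nth[OF gf strat assms(6) k]
      by (simp add: take_Suc_conv_app_nth typeset_at_snoc move_profile_def)
  qed (use assms(4) in simp)
  then show ?thesis
    by (metis order_refl take_all)
qed

lemma play_divergence:
  assumes gf: "game_form N G"
    and "\<forall>j \<in> N. strategy G j (t j)" "\<forall>j \<in> N. strategy G j (t' j)" "play G t \<noteq> play G t'"
  obtains g where "prefix (g @ [move_profile G t g]) (play G t)"
    "prefix (g @ [move_profile G t' g]) (play G t')"
proof -
  have terminal: "play G t \<in> terminal G" "play G t' \<in> terminal G"
    using play_terminal[OF gf] assms(2,3) by blast+
  moreover from this have "play G t \<in> hist G" "play G t' \<in> hist G"
    by (simp_all add: terminal_def)
  ultimately have "play G t \<parallel> play G t'"
    using terminal_prefix_eq[OF gf] assms(4) by (metis parallelI)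
  then obtain g a as b bs where split: "play G t = g @ a # as" "play G t' = g @ b # bs"
    using parallel_decomp by blast
  have "prefix (g @ [a]) (play G t)" "prefix (g @ [b]) (play G t')"
    using split by (simp_all add: prefixI)
  moreover from this have "a = move_profile G t g" "b = move_profile G t' g"
    using prefix_play_nth[OF gf assms(2), of "g @ [a]" "length g"]
      prefix_play_nth[OF gf assms(3), of "g @ [b]" "length g"] by simp_all
  ultimately show thesis
    using that by simp
qed

subsection \<open>Indifference reaction-proofness\<close>

definition indifferent_at ::
  "'i set \<Rightarrow> ('i \<Rightarrow> 'th set) \<Rightarrow> ('i \<Rightarrow> 'th \<Rightarrow> 'x \<Rightarrow> 'x \<Rightarrow> bool) \<Rightarrow> (('i \<Rightarrow> 'th) \<Rightarrow> 'x)
     \<Rightarrow> 'i \<Rightarrow> ('i, 'th set) hist \<Rightarrow> bool" where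
  "indifferent_at N Th R f j h \<longleftrightarrow>
     (\<forall>\<theta> \<in> typeprofs_at N Th h. \<forall>\<theta>' \<in> typeprofs_at N Th h. \<forall>\<theta>j \<in> Th j. R j \<theta>j (f \<theta>) (f \<theta>'))"

lemma indiff_reaction_proof_siblings:
  assumes gf: "game_form N G" and irp: "indiff_reaction_proof N Th R f G"
    and "i \<in> N" "j \<in> N" "i \<noteq> j" "h1 \<in> dec_nodes G i" "h2 \<in> dec_nodes G i"
    and "experience G i h1 = experience G i h2" "experience G i h1 \<noteq> []"
    and "infoset_of G i h1 \<noteq> infoset_of G i h2"
    and "\<forall>k \<in> N - {i, j}. strategy G k (s k)"
    and "consistent N G (N - {i, j}) s h1" "consistent N G (N - {i, j}) s h2"
  shows "indifferent_at N Th R f j h1 \<or> indifferent_at N Th R f j h2"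
proof -
  define I1 I2 where "I1 = infoset_of G i h1" and "I2 = infoset_of G i h2"
  define K where "K = fst (last (experience G i h1))"
  have I1: "I1 \<in> info G i" "h1 \<in> I1" and I2: "I2 \<in> info G i" "h2 \<in> I2"
    using infoset_of_dec_node[OF gf assms(3)] assms(6,7) by (simp_all add: I1_def I2_def)
  have K: "K \<in> info G i" "immediate_succ G i K I1" "immediate_succ G i K I2"
    using immediate_succ_last_experience[OF gf assms(3) I1] immediate_succ_last_experience[OF gf assms(3) I2]
      assms(8,9) by (simp_all add: K_def)
  have "typeset_info Th i I1 = typeset_info Th i I2"
    using typeset_info_last_experience[OF gf assms(3) I1] typeset_info_last_experience[OF gf assms(3) I2]
      assms(8,9) by simp
  moreover have "\<exists>s. (\<forall>k \<in> N - {i, j}. strategy G k (s k)) \<and>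
      consistent N G (N - {i, j}) s h1 \<and> consistent N G (N - {i, j}) s h2"
    using assms(11-13) by blast
  ultimately have "\<exists>hk \<in> {h1, h2}. \<forall>\<theta> \<in> typeprofs_at N Th hk. \<forall>\<theta>' \<in> typeprofs_at N Th hk.
      \<forall>\<theta>j \<in> Th j. R j \<theta>j (f \<theta>) (f \<theta>')"
    using irp[unfolded indiff_reaction_proof_def, rule_format, OF assms(3-5) K(1) I1(1) I2(1) _ I1(2) I2(2)]
      assms(10) K(2,3) by (simp add: I1_def I2_def)
  then show ?thesis
    unfolding indifferent_at_def by blast
qed

lemma experience_parallel_if_typesets_disjoint:
  assumes gm: "gradual_mech N Th f G" and "i \<in> N" "x \<in> hist G" "y \<in> hist G"
    and "experience G i x \<noteq> []" "experience G i y \<noteq> []"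
    and disjoint: "typeset_at Th i x \<inter> typeset_at Th i y = {}"
  shows "experience G i x \<parallel> experience G i y"
proof
  show "\<not> prefix (experience G i x) (experience G i y)"
  proof
    assume "prefix (experience G i x) (experience G i y)"
    then have "typeset_at Th i y \<subseteq> typeset_at Th i x"
      using typeset_at_experience_prefix[OF gm assms(2-4) _ assms(5)] by blast
    then show False
      using disjoint typeset_at_nonempty_subset(1)[OF gm assms(4,2)] by blast
  qed
  show "\<not> prefix (experience G i y) (experience G i x)"
  proof
    assume "prefix (experience G i y) (experience G i x)"
    then have "typeset_at Th i x \<subseteq> typeset_at Th i y"
      using typeset_at_experience_prefix[OF gm assms(2,4,3) _ assms(6)] by blast
    then show False
      using disjoint typeset_at_nonempty_subset(1)[OF gm assms(3,2)] by blast
  qed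
qed

lemma disjoint_typesets_experience_split:
  assumes gm: "gradual_mech N Th f G" and "i \<in> N" "x \<in> hist G" "y \<in> hist G"
    and "typeset_at Th i x \<inter> typeset_at Th i y = {}"
    and e: "prefix e (experience G i x)" "prefix e (experience G i y)" "e \<noteq> []"
  obtains kx ky where "kx < length x" "ky < length y"
    "i \<in> mov G (take kx x)" "i \<in> mov G (take ky y)"
    "experience G i (take kx x) = experience G i (take ky y)"
    "length e \<le> length (experience G i (take kx x))"
    "(infoset_of G i (take kx x), the ((x ! kx) i)) \<noteq> (infoset_of G i (take ky y), the ((y ! ky) i))"
proof -
  have "experience G i x \<noteq> []" "experience G i y \<noteq> []"
    using e by (auto simp: prefix_Nil)
  then have "experience G i x \<parallel> experience G i y"
    by (rule experience_parallel_if_typesets_disjoint[OF gm assms(2-4) _ _ assms(5)])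
  then obtain cs b bs c cs' where "b \<noteq> c"
    and split: "experience G i x = cs @ b # bs" "experience G i y = cs @ c # cs'"
    using parallel_decomp by blast
  have "length e \<le> length cs"
  proof (rule ccontr)
    assume "\<not> length e \<le> length cs"
    then show False
      using prefix_nth[OF e(1), of "length cs"] prefix_nth[OF e(2), of "length cs"] split \<open>b \<noteq> c\<close>
      by simp
  qed
  moreover obtain kx where "kx < length x" "i \<in> mov G (take kx x)"
      "experience G i (take kx x) = cs" "b = (infoset_of G i (take kx x), the ((x ! kx) i))"
    using experience_nth[of "length cs" G i x] split(1) by auto
  moreover obtain ky where "ky < length y" "i \<in> mov G (take ky y)"
      "experience G i (take ky y) = cs" "c = (infoset_of G i (take ky y), the ((y ! ky) i))"
    using experience_nth[of "length cs" G i y] split(2) by auto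
  ultimately show thesis
    using that \<open>b \<noteq> c\<close> by simp
qed

lemma typesets_meet_before_indifference:
  assumes gm: "gradual_mech N Th f G" and irp: "indiff_reaction_proof N Th R f G"
    and "d \<in> N" "p \<in> N" "p \<noteq> d"
    and strat: "\<forall>j \<in> N. strategy G j (t j)" and strat': "\<forall>j \<in> N. strategy G j (t' j)"
    and agree: "\<forall>j \<in> N - {d}. t' j = t j"
    and x: "prefix x (play G t)" and y: "prefix y (play G t')"
    and "prefix u x" "prefix v y" "u \<noteq> []" "experience G p u = experience G p v"
    and min_x: "\<forall>k. length u \<le> k \<longrightarrow> k < length x \<longrightarrow> \<not> indifferent_at N Th R f d (take k x)"
    and min_y: "\<forall>k. length v \<le> k \<longrightarrow> k < length y \<longrightarrow> \<not> indifferent_at N Th R f d (take k y)"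
  shows "typeset_at Th p x \<inter> typeset_at Th p y \<noteq> {}"
proof
  assume "typeset_at Th p x \<inter> typeset_at Th p y = {}"
  note gf = gradual_mech_game_form[OF gm]
  have hist: "x \<in> hist G" "y \<in> hist G"
    using prefix_play_hist[OF gf strat x] prefix_play_hist[OF gf strat' y] .
  define e where "e = experience G p u"
  have e: "prefix e (experience G p x)" "prefix e (experience G p y)" "e \<noteq> []"
    unfolding e_def
    using experience_mono[OF assms(11)] experience_mono[OF assms(12), of G p, folded assms(14)]
      experience_ne_Nil[OF gf assms(4,13)] by simp_all
  obtain kx ky where k: "kx < length x" "ky < length y"
      "p \<in> mov G (take kx x)" "p \<in> mov G (take ky y)"
      "experience G p (take kx x) = experience G p (take ky y)" "length e \<le> length (experience G p (take kx x))"
      and differ: "(infoset_of G p (take kx x), the ((x ! kx) p)) \<noteq> (infoset_of G p (take ky y), the ((y ! ky) p))"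
    by (rule disjoint_typesets_experience_split[OF gm assms(4) hist \<open>_ = {}\<close> e])
  have dec: "take kx x \<in> dec_nodes G p" "take ky y \<in> dec_nodes G p"
    using hist_take_nth(1)[OF gf hist(1) k(1)] hist_take_nth(1)[OF gf hist(2) k(2)] k(3,4)
    by (simp_all add: dec_nodes_def)
  have beyond: "length u \<le> kx" "length v \<le> ky"
    using length_le_if_experience_length_le[OF assms(11) k(3)]
      length_le_if_experience_length_le[OF assms(12) k(4)] k(5,6) assms(14) by (simp_all add: e_def)
  have "infoset_of G p (take kx x) \<noteq> infoset_of G p (take ky y)"
  proof
    assume same: "infoset_of G p (take kx x) = infoset_of G p (take ky y)"
    have "t p (take kx x) = t p (take ky y)"
      using strat assms(4) infoset_of_dec_node[OF gf assms(4) dec(1)] infoset_of_dec_node[OF gf assms(4) dec(2)]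
        same unfolding strategy_def by metis
    then show False
      using differ same k(3,4) agree assms(4,5)
        prefix_play_nth[OF gf strat x k(1)] prefix_play_nth[OF gf strat' y k(2)]
      by (simp add: move_profile_def)
  qed
  moreover have "consistent N G (N - {p, d}) t (take kx x)" "consistent N G (N - {p, d}) t (take ky y)"
    unfolding consistent_def
    using strat strat' agree prefix_order.trans[OF take_is_prefix x] prefix_order.trans[OF take_is_prefix y]
    by blast+
  ultimately have "indifferent_at N Th R f d (take kx x) \<or> indifferent_at N Th R f d (take ky y)"
    using indiff_reaction_proof_siblings[OF gf irp assms(4,3,5) dec k(5)] k(6) e(3) strat by fastforce
  then show False
    using min_x min_y beyond k(1,2) by auto
qed

subsection \<open>Incentive compatibility\<close>

lemma outc_indifferent_prefix:
  assumes gm: "gradual_mech N Th f G" and "z \<in> terminal G" "prefix x z"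
    and "x = z \<or> indifferent_at N Th R f d x" "\<theta> \<in> typeprofs_at N Th x" "\<theta>d \<in> Th d"
    and "R d \<theta>d (outc G z) (outc G z)"
  shows "R d \<theta>d (outc G z) (f \<theta>)" "R d \<theta>d (f \<theta>) (outc G z)"
proof -
  have "z \<in> hist G"
    using assms(2) by (simp add: terminal_def)
  then obtain \<theta>z where "\<theta>z \<in> typeprofs_at N Th z"
    using typeprofs_at_nonempty[OF gm] by blast
  then have \<theta>z: "\<theta>z \<in> typeprofs_at N Th x" "outc G z = f \<theta>z"
    using typeprofs_at_antimono[OF gm \<open>z \<in> hist G\<close> assms(3)] gradual_mech_outc[OF gm assms(2)]
    by auto
  have "R d \<theta>d (f \<theta>z) (f \<theta>) \<and> R d \<theta>d (f \<theta>) (f \<theta>z)"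
  proof (cases "x = z")
    case True
    then have "outc G z = f \<theta>"
      using gradual_mech_outc[OF gm assms(2)] assms(5) by simp
    then show ?thesis
      using assms(7) \<theta>z(2) by simp
  next
    case False
    then have "indifferent_at N Th R f d x"
      using assms(4) by simp
    then show ?thesis
      using \<theta>z(1) assms(5,6) unfolding indifferent_at_def by blast
  qed
  then show "R d \<theta>d (outc G z) (f \<theta>)" "R d \<theta>d (f \<theta>) (outc G z)"
    using \<theta>z(2) by simp_all
qed

lemma typeprofs_at_agree_off:
  assumes "d \<in> N" "a \<in> typeset_at Th d x" "b \<in> typeset_at Th d y"
    and "\<forall>p \<in> N - {d}. typeset_at Th p x \<inter> typeset_at Th p y \<noteq> {}"
  obtains \<theta> where "\<theta> \<in> typeprofs_at N Th x" "\<theta>(d := b) \<in> typeprofs_at N Th y" "\<theta> d = a"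
proof
  define \<theta> where
    "\<theta> = restrict (\<lambda>p. if p = d then a else SOME v. v \<in> typeset_at Th p x \<inter> typeset_at Th p y) N"
  have "(SOME v. v \<in> typeset_at Th p x \<inter> typeset_at Th p y) \<in> typeset_at Th p x \<inter> typeset_at Th p y"
    if "p \<in> N - {d}" for p
    using assms(4) that some_in_eq[of "typeset_at Th p x \<inter> typeset_at Th p y"] by blast
  then show "\<theta> \<in> typeprofs_at N Th x" "\<theta>(d := b) \<in> typeprofs_at N Th y" "\<theta> d = a"
    using assms(1-3) unfolding typeprofs_at_def \<theta>_def by (auto simp: PiE_iff extensional_def)
qed

lemma outc_preferred_at_stopping_points:
  assumes gm: "gradual_mech N Th f G" and sp: "strategy_proof N Th R f" and "d \<in> N" "\<theta> \<in> Th d"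
    and pref: "complete_transitive_on X (R d \<theta>)" "f ` PiE N Th \<subseteq> X" "outc G ` terminal G \<subseteq> X"
    and terminal: "z \<in> terminal G" "z' \<in> terminal G" and "prefix x z" "prefix y z'"
    and "x = z \<or> indifferent_at N Th R f d x" "y = z' \<or> indifferent_at N Th R f d y"
    and "\<theta> \<in> typeset_at Th d x" "\<forall>p \<in> N - {d}. typeset_at Th p x \<inter> typeset_at Th p y \<noteq> {}"
  shows "R d \<theta> (outc G z) (outc G z')"
proof -
  have hist: "x \<in> hist G" "y \<in> hist G"
    using terminal assms(10,11) game_form_prefix_closed[OF gradual_mech_game_form[OF gm]]
    by (auto simp: terminal_def)
  have outc: "outc G z \<in> X" "outc G z' \<in> X"
    using pref(3) terminal by blast+
  have refl: "R d \<theta> (outc G z) (outc G z)" "R d \<theta> (outc G z') (outc G z')"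
    using pref(1) outc unfolding complete_transitive_on_def by blast+
  have trans: "\<And>a b c. a \<in> X \<Longrightarrow> b \<in> X \<Longrightarrow> c \<in> X \<Longrightarrow> R d \<theta> a b \<Longrightarrow> R d \<theta> b c \<Longrightarrow> R d \<theta> a c"
    using pref(1) unfolding complete_transitive_on_def by blast
  obtain \<theta>' where "\<theta>' \<in> typeset_at Th d y"
    using typeset_at_nonempty_subset(1)[OF gm hist(2) assms(3)] by blast
  then obtain \<theta>x where \<theta>x: "\<theta>x \<in> typeprofs_at N Th x" "\<theta>x(d := \<theta>') \<in> typeprofs_at N Th y"
      "\<theta>x d = \<theta>"
    using typeprofs_at_agree_off[OF assms(3,14)] assms(15) by metis
  have types: "\<theta>x \<in> PiE N Th" "\<theta>x(d := \<theta>') \<in> PiE N Th"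
    using \<theta>x(1,2) typeprofs_at_subset[OF gm] hist by blast+
  then have "\<theta>' \<in> Th d"
    using assms(3) by (metis PiE_E fun_upd_same)
  then have "R d \<theta> (f \<theta>x) (f (\<theta>x(d := \<theta>')))"
    using sp assms(3) types(1) \<theta>x(3) unfolding strategy_proof_def by metis
  moreover have "R d \<theta> (outc G z) (f \<theta>x)" "R d \<theta> (f (\<theta>x(d := \<theta>'))) (outc G z')"
    using outc_indifferent_prefix[OF gm terminal(1) assms(10,12) \<theta>x(1) assms(4) refl(1)]
      outc_indifferent_prefix[OF gm terminal(2) assms(11,13) \<theta>x(2) assms(4) refl(2)] by blast+
  moreover have "f \<theta>x \<in> X" "f (\<theta>x(d := \<theta>')) \<in> X"
    using types pref(2) by blast+
  ultimately show ?thesis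
    using trans outc by metis
qed

lemma unconditional_play_preferred:
  assumes gm: "gradual_mech N Th f G" and irp: "indiff_reaction_proof N Th R f G"
    and sp: "strategy_proof N Th R f" and "d \<in> N" "\<theta> \<in> Th d"
    and strat: "\<forall>j \<in> N. strategy G j (t j)" and strat': "\<forall>j \<in> N. strategy G j (t' j)"
    and agree: "\<forall>j \<in> N - {d}. t' j = t j" and "unconditional Th G d \<theta> (t d)"
    and pref: "complete_transitive_on X (R d \<theta>)" "f ` PiE N Th \<subseteq> X" "outc G ` terminal G \<subseteq> X"
  shows "R d \<theta> (outcome G t) (outcome G t')"
proof -
  note gf = gradual_mech_game_form[OF gm]
  define z z' where "z = play G t" and "z' = play G t'"
  have terminal: "z \<in> terminal G" "z' \<in> terminal G"
    using play_terminal[OF gf] strat strat' by (simp_all add: z_def z'_def)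
  have "R d \<theta> (outc G z) (outc G z')"
  proof (cases "z = z'")
    case True
    then show ?thesis
      using pref(1,3) terminal unfolding complete_transitive_on_def by blast
  next
    case False
    then obtain g where g: "prefix (g @ [move_profile G t g]) z" "prefix (g @ [move_profile G t' g]) z'"
      using play_divergence[OF gf strat strat'] by (auto simp: z_def z'_def)
    obtain x where x: "prefix (g @ [move_profile G t g]) x" "prefix x z"
        "x = z \<or> indifferent_at N Th R f d x"
        "\<forall>k. length (g @ [move_profile G t g]) \<le> k \<longrightarrow> k < length x \<longrightarrow> \<not> indifferent_at N Th R f d (take k x)"
      using first_prefix_satisfying[OF g(1)] by blast
    obtain y where y: "prefix (g @ [move_profile G t' g]) y" "prefix y z'"
        "y = z' \<or> indifferent_at N Th R f d y"
        "\<forall>k. length (g @ [move_profile G t' g]) \<le> k \<longrightarrow> k < length y \<longrightarrow> \<not> indifferent_at N Th R f d (take k y)"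
      using first_prefix_satisfying[OF g(2)] by blast
    have same_experience:
      "experience G p (g @ [move_profile G t g]) = experience G p (g @ [move_profile G t' g])"
      if "p \<in> N - {d}" for p
      using agree that by (simp add: experience_snoc move_profile_def)
    have "\<theta> \<in> typeset_at Th d x"
      using typeset_at_play_unconditional[OF gm strat assms(4,5,9)] x(2) by (simp add: z_def)
    moreover have "\<forall>p \<in> N - {d}. typeset_at Th p x \<inter> typeset_at Th p y \<noteq> {}"
      using typesets_meet_before_indifference[OF gm irp \<open>d \<in> N\<close> _ _ strat strat' agree _ _ x(1) y(1) _ _ x(4) y(4)]
        same_experience x(2) y(2) by (auto simp: z_def z'_def)
    ultimately show ?thesis
      by (rule outc_preferred_at_stopping_points[OF gm sp assms(4,5) pref terminal x(2) y(2) x(3) y(3)])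
  qed
  then show ?thesis
    by (simp add: outcome_def z_def z'_def)
qed

theorem theorem3:
  fixes N :: "'i set" and X :: "'x set" and Th :: "'i \<Rightarrow> 'th set"
    and R :: "'i \<Rightarrow> 'th \<Rightarrow> 'x \<Rightarrow> 'x \<Rightarrow> bool"
    and f :: "('i \<Rightarrow> 'th) \<Rightarrow> 'x" and G :: "('i, 'th set, 'x) game"
  assumes "finite N" and "finite X" and "\<And>i. i \<in> N \<Longrightarrow> finite (Th i)"
    and "\<And>i t. i \<in> N \<Longrightarrow> t \<in> Th i \<Longrightarrow> complete_transitive_on X (R i t)"
    and "f ` (PiE N Th) \<subseteq> X"
    and "outc G ` terminal G \<subseteq> X"
    and "strategy_proof N Th R f"
    and "gradual_mech N Th f G"
    and "indiff_reaction_proof N Th R f G"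
  shows "incentive_compatible N Th R G"
  unfolding incentive_compatible_def
proof (intro ballI allI impI)
  fix d \<theta> \<sigma>u \<sigma> s
  assume "d \<in> N" "\<theta> \<in> Th d"
    and "strategy G d \<sigma>u \<and> unconditional Th G d \<theta> \<sigma>u \<and> strategy G d \<sigma> \<and>
      (\<forall>k \<in> N - {d}. strategy G k (s k))"
  then show "R d \<theta> (outcome G (s(d := \<sigma>u))) (outcome G (s(d := \<sigma>)))"
    using unconditional_play_preferred[OF assms(8,9,7), of d \<theta> "s(d := \<sigma>u)" "s(d := \<sigma>)" X]
      assms(4-6) by auto
qed

end
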